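(* Let $G$ be a finite graph that admits a Kasteleyn signing (for example, any planar graph). If $C_1,\dots,C_n$ are channels of $G$ that are linearly independent in the $\mathbf{Z}/2\mathbf{Z}$-vector space $\mathcal{C}(G)$, then $2^n$ divides $m_G^2$. In particular, $|\mathcal{C}(G)|$ divides $m_G^2$. If moreover $G$ is bipartite and admits a bipartite Kasteleyn signing (for example, $G$ is bipartite and planar), and $C_1,\dots,C_n\in\mathcal{C}_B(G)$ are linearly independent, then $2^n$ divides $m_G$.
   Context: All graphs are finite, undirected, without self-loops, with at most one edge between two vertices. $m_G$ denotes the number of perfect matchings of $G$. For a vertex $v$, $N(v)$ is its set of neighbours. A channel of $G=(V,E)$ is a set $C\subseteq V$ such that $|N(v)\cap C|$ is even for every $v\in V$ (the empty set is a channel). $\mathcal{C}(G)$ is the set of channels; it is a vector space over $\mathbf{Z}/2\mathbf{Z}$ with addition given by symmetric difference. If $G$ is bipartite with vertices colored black and white, $\mathcal{C}_B(G)$ (resp. $\mathcal{C}_W(G)$) denotes the subspace of channels consisting only of black (resp. white) vertices. A Kasteleyn signing of $G$ with adjacency matrix $A=(a_{ij})$ is a matrix $K=(\pm a_{ij})$ (obtained by changing signs of some entries) with $\det K=m_G^2$. For bipartite $G$, the bipartite adjacency matrix $B$ is the submatrix of $A$ with rows indexed by white and columns by black vertices; a bipartite Kasteleyn signing is a matrix $H=(\pm b_{ij})$ with $\det H=m_G$ (when $B$ is square; if $B$ is not square, $m_G=0$). *)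

theory Defs
  imports "Jordan_Normal_Form.Determinant"
begin

definition simple_graph :: "nat \<Rightarrow> (nat \<Rightarrow> nat \<Rightarrow> bool) \<Rightarrow> bool" where
  "simple_graph N E \<longleftrightarrow> (\<forall>u v. E u v \<longrightarrow> u < N \<and> v < N \<and> E v u \<and> u \<noteq> v)"

definition edges :: "(nat \<Rightarrow> nat \<Rightarrow> bool) \<Rightarrow> nat set set" where
  "edges E = {{u, v} | u v. E u v}"

definition perfect_matching :: "nat \<Rightarrow> (nat \<Rightarrow> nat \<Rightarrow> bool) \<Rightarrow> nat set set \<Rightarrow> bool" where
  "perfect_matching N E M \<longleftrightarrow> M \<subseteq> edges E \<and> (\<forall>v<N. \<exists>!e. e \<in> M \<and> v \<in> e)"

definition num_pm :: "nat \<Rightarrow> (nat \<Rightarrow> nat \<Rightarrow> bool) \<Rightarrow> nat" where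
  "num_pm N E = card {M. perfect_matching N E M}"

definition channel :: "nat \<Rightarrow> (nat \<Rightarrow> nat \<Rightarrow> bool) \<Rightarrow> nat set \<Rightarrow> bool" where
  "channel N E C \<longleftrightarrow> C \<subseteq> {0..<N} \<and> (\<forall>v<N. even (card {u \<in> C. E v u}))"

text \<open>Sum over Z/2Z (symmetric difference) of the sets C i, i \<in> S.\<close>
definition symdiff_sum :: "nat set \<Rightarrow> (nat \<Rightarrow> 'a set) \<Rightarrow> 'a set" where
  "symdiff_sum S C = {v. odd (card {i \<in> S. v \<in> C i})}"

text \<open>C 0, ..., C (n-1) linearly independent over Z/2Z: no nontrivial combination
  (given by its support S) is the zero vector (empty set).\<close>
definition lin_indep_Z2 :: "nat \<Rightarrow> (nat \<Rightarrow> 'a set) \<Rightarrow> bool" where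
  "lin_indep_Z2 n C \<longleftrightarrow> (\<forall>S \<subseteq> {0..<n}. S \<noteq> {} \<longrightarrow> symdiff_sum S C \<noteq> {})"

definition adj_mat :: "nat \<Rightarrow> (nat \<Rightarrow> nat \<Rightarrow> bool) \<Rightarrow> int mat" where
  "adj_mat N E = mat N N (\<lambda>(i, j). if E i j then 1 else 0)"

definition sign_change_of :: "int mat \<Rightarrow> int mat \<Rightarrow> bool" where
  "sign_change_of K A \<longleftrightarrow> dim_row K = dim_row A \<and> dim_col K = dim_col A \<and>
     (\<forall>i < dim_row A. \<forall>j < dim_col A. K $$ (i, j) = A $$ (i, j) \<or> K $$ (i, j) = - A $$ (i, j))"

definition kasteleyn_signing :: "nat \<Rightarrow> (nat \<Rightarrow> nat \<Rightarrow> bool) \<Rightarrow> int mat \<Rightarrow> bool" where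
  "kasteleyn_signing N E K \<longleftrightarrow> sign_change_of K (adj_mat N E) \<and> det K = int (num_pm N E) ^ 2"

definition bipartite_col :: "nat \<Rightarrow> (nat \<Rightarrow> nat \<Rightarrow> bool) \<Rightarrow> (nat \<Rightarrow> bool) \<Rightarrow> bool" where
  "bipartite_col N E black \<longleftrightarrow> (\<forall>u v. E u v \<longrightarrow> black u \<noteq> black v)"

definition bip_adj_mat :: "(nat \<Rightarrow> nat \<Rightarrow> bool) \<Rightarrow> nat list \<Rightarrow> nat list \<Rightarrow> int mat" where
  "bip_adj_mat E ws bs = mat (length ws) (length bs) (\<lambda>(i, j). if E (ws ! i) (bs ! j) then 1 else 0)"

definition admits_bip_kasteleyn :: "nat \<Rightarrow> (nat \<Rightarrow> nat \<Rightarrow> bool) \<Rightarrow> (nat \<Rightarrow> bool) \<Rightarrow> bool" where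
  "admits_bip_kasteleyn N E black \<longleftrightarrow>
     (\<exists>ws bs. distinct ws \<and> distinct bs \<and>
        set ws = {v. v < N \<and> \<not> black v} \<and> set bs = {v. v < N \<and> black v} \<and>
        (length ws = length bs \<longrightarrow>
           (\<exists>H. sign_change_of H (bip_adj_mat E ws bs) \<and> det H = int (num_pm N E))))"

end

theory Submission
  imports Defs
begin

text \<open>
  Every channel \<open>C\<close> is a relation mod 2 among the columns of a signing \<open>K\<close> of the adjacency
  matrix: in row \<open>v\<close> the columns indexed by \<open>C\<close> sum to \<open>\<plusminus>|N(v) \<inter> C|\<close> mod 2, which is even.
  Let \<open>V\<close> be a \<open>Z/2\<close>-subspace of such relations and \<open>k \<in> S \<in> V\<close>. Replacing column \<open>k\<close>
  by half the sum of the columns in \<open>S\<close> halves the determinant (Cramer's rule), while the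
  members of \<open>V\<close> avoiding \<open>k\<close> form a subspace of half the size consisting of relations of the
  new matrix. By induction \<open>|V|\<close> divides \<open>det K = m\<^sub>G\<^sup>2\<close>. The span of \<open>n\<close> independent channels
  has \<open>2\<^sup>n\<close> elements; in the bipartite case the same argument runs on the bipartite signing,
  whose columns are the black vertices and whose determinant is \<open>m\<^sub>G\<close>.
\<close>

definition sym_diff_subspace :: "'a set set \<Rightarrow> bool" where
  "sym_diff_subspace V \<longleftrightarrow> {} \<in> V \<and> (\<forall>S\<in>V. \<forall>T\<in>V. sym_diff S T \<in> V)"

lemma sym_diff_subspace_Pow: "sym_diff_subspace (Pow X)"
  by (auto simp: sym_diff_subspace_def)

lemma sym_diff_subspace_Int:
  "sym_diff_subspace V \<Longrightarrow> sym_diff_subspace W \<Longrightarrow> sym_diff_subspace (V \<inter> W)"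
  by (auto simp: sym_diff_subspace_def)

lemma sym_diff_subspace_image:
  assumes V: "sym_diff_subspace V"
    and f: "f {} = {}" "\<And>S T. f (sym_diff S T) = sym_diff (f S) (f T)"
  shows "sym_diff_subspace (f ` V)"
  unfolding sym_diff_subspace_def
proof (intro conjI ballI)
  show "{} \<in> f ` V"
    using V f(1) unfolding sym_diff_subspace_def by (metis imageI)
  fix X Y assume "X \<in> f ` V" "Y \<in> f ` V"
  then obtain S T where ST: "S \<in> V" "T \<in> V" "X = f S" "Y = f T" by blast
  then have "f (sym_diff S T) \<in> f ` V"
    using V unfolding sym_diff_subspace_def by blast
  then show "sym_diff X Y \<in> f ` V"
    unfolding f(2) ST .
qed

lemma even_card_sym_diff:
  assumes "finite A" "finite B"
  shows "even (card (sym_diff A B)) \<longleftrightarrow> even (card A + card B)"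
proof -
  have "card A = card (A \<inter> B) + card (A - B)" "card B = card (A \<inter> B) + card (B - A)"
    using assms by (metis card_Int_Diff Int_commute)+
  moreover have "card (sym_diff A B) = card (A - B) + card (B - A)"
    using assms by (intro card_Un_disjoint) auto
  ultimately show ?thesis by presburger
qed

lemma card_sym_diff_subspace_eq_double:
  assumes V: "sym_diff_subspace V" "finite V" and S: "S \<in> V" "k \<in> S"
  shows "card V = 2 * card (V \<inter> Pow (- {k}))"
proof -
  have closed: "sym_diff S T \<in> V" if "T \<in> V" for T
    using V S that unfolding sym_diff_subspace_def by blast
  have "bij_betw (sym_diff S) (V \<inter> Pow (- {k})) (V - Pow (- {k}))"
  proof (rule bij_betw_byWitness[where f' = "sym_diff S"])
    show "\<forall>T \<in> V \<inter> Pow (- {k}). sym_diff S (sym_diff S T) = T"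
      "\<forall>T \<in> V - Pow (- {k}). sym_diff S (sym_diff S T) = T" by blast+
    show "sym_diff S ` (V \<inter> Pow (- {k})) \<subseteq> V - Pow (- {k})"
      "sym_diff S ` (V - Pow (- {k})) \<subseteq> V \<inter> Pow (- {k})"
      using closed S(2) by auto
  qed
  then have "card (V - Pow (- {k})) = card (V \<inter> Pow (- {k}))"
    by (simp add: bij_betw_same_card)
  moreover have "card V = card (V \<inter> Pow (- {k})) + card (V - Pow (- {k}))"
    using V(2) by (metis card_Int_Diff)
  ultimately show ?thesis by simp
qed

lemma det_replace_col_smult:
  fixes A :: "'a :: comm_ring_1 mat"
  assumes A: "A \<in> carrier_mat n n" and k: "k < n" and b: "b \<in> carrier_vec n"
  shows "det (replace_col A (a \<cdot>\<^sub>v b) k) = a * det (replace_col A b k)"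
proof -
  have cofactor_eq: "cofactor (replace_col A v k) i k = cofactor A i k" for v i
    unfolding cofactor_def
    by (rule arg_cong[where f = "\<lambda>B. _ * det B"], rule eq_matI)
      (auto simp: replace_col_def mat_delete_def)
  have expand: "det (replace_col A v k) = (\<Sum>i<n. v $ i * cofactor A i k)" for v
  proof -
    have "det (replace_col A v k) =
        (\<Sum>i<n. replace_col A v k $$ (i, k) * cofactor (replace_col A v k) i k)"
      by (rule laplace_expansion_column) (use A k in \<open>auto simp: replace_col_def\<close>)
    also have "\<dots> = (\<Sum>i<n. v $ i * cofactor A i k)"
      unfolding cofactor_eq using A k by (simp add: replace_col_def)
    finally show ?thesis .
  qed
  have "det (replace_col A (a \<cdot>\<^sub>v b) k) = (\<Sum>i<n. a * (b $ i * cofactor A i k))"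
    unfolding expand using b by (intro sum.cong) auto
  then show ?thesis
    by (simp only: expand sum_distrib_left)
qed

lemma mult_mat_vec_indicator:
  fixes A :: "'a :: semiring_1 mat"
  assumes "A \<in> carrier_mat n n" "S \<subseteq> {0..<n}"
  shows "A *\<^sub>v vec n (\<lambda>j. if j \<in> S then 1 else 0) = vec n (\<lambda>i. \<Sum>j\<in>S. A $$ (i, j))"
proof -
  have "(\<Sum>j<n. A $$ (i, j) * (if j \<in> S then 1 else 0)) = (\<Sum>j\<in>S. A $$ (i, j))" for i
  proof -
    have "(\<Sum>j<n. A $$ (i, j) * (if j \<in> S then 1 else 0)) = (\<Sum>j<n. if j \<in> S then A $$ (i, j) else 0)"
      by (rule sum.cong) auto
    also have "\<dots> = (\<Sum>j\<in>S. A $$ (i, j))"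
      using assms(2) by (simp add: lessThan_atLeast0 sum.If_cases Int_absorb1)
    finally show ?thesis .
  qed
  then show ?thesis
    using assms(1) by (auto simp: mult_mat_vec_def scalar_prod_def lessThan_atLeast0)
qed

lemma det_eq_double_det_replace_col_half_sum:
  fixes A :: "int mat"
  assumes A: "A \<in> carrier_mat n n" and S: "S \<subseteq> {0..<n}" "k \<in> S"
    and even_sums: "\<forall>i<n. even (\<Sum>j\<in>S. A $$ (i, j))"
  shows "det A = 2 * det (replace_col A (vec n (\<lambda>i. (\<Sum>j\<in>S. A $$ (i, j)) div 2)) k)"
proof -
  let ?x = "vec n (\<lambda>j. if j \<in> S then 1 else 0)"
  let ?c = "vec n (\<lambda>i. (\<Sum>j\<in>S. A $$ (i, j)) div 2)"
  have k: "k < n"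
    using S by auto
  have "A *\<^sub>v ?x = vec n (\<lambda>i. \<Sum>j\<in>S. A $$ (i, j))"
    by (rule mult_mat_vec_indicator[OF A S(1)])
  also have "\<dots> = 2 \<cdot>\<^sub>v ?c"
    using even_sums by (intro eq_vecI) auto
  finally have Ax: "A *\<^sub>v ?x = 2 \<cdot>\<^sub>v ?c" .
  have "det A = det (replace_col A (A *\<^sub>v ?x) k)"
    using cramer_lemma_mat[OF A _ k, of ?x] S(2) k by simp
  also have "\<dots> = 2 * det (replace_col A ?c k)"
    unfolding Ax by (rule det_replace_col_smult[OF A k]) simp
  finally show ?thesis .
qed

lemma sum_row_replace_col_eq:
  assumes "A \<in> carrier_mat n n" "i < n" "T \<subseteq> {0..<n}" "k \<notin> T"
  shows "(\<Sum>j\<in>T. replace_col A c k $$ (i, j)) = (\<Sum>j\<in>T. A $$ (i, j))"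
  using assms by (intro sum.cong) (auto simp: replace_col_def subset_iff)

lemma card_dvd_det_if_even_col_sums:
  fixes A :: "int mat"
  assumes "A \<in> carrier_mat n n" "sym_diff_subspace V" "V \<subseteq> Pow {0..<n}"
    and "\<forall>S\<in>V. \<forall>i<n. even (\<Sum>j\<in>S. A $$ (i, j))"
  shows "int (card V) dvd det A"
  using assms
proof (induction "card V" arbitrary: A V rule: less_induct)
  case less
  note A = less.prems(1) and V = less.prems(2,3) and even_sums = less.prems(4)
  have "finite V"
    using V(2) by (rule finite_subset) simp
  show ?case
  proof (cases "V \<subseteq> {{}}")
    case True
    then have "V = {{}}"
      using V(1) unfolding sym_diff_subspace_def by blast
    then show ?thesis by simp
  next
    case False
    then obtain S k where S: "S \<in> V" "k \<in> S" by blast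
    have S_sub: "S \<subseteq> {0..<n}" using S(1) V(2) by blast
    define V' where "V' = V \<inter> Pow (- {k})"
    have card_V: "card V = 2 * card V'"
      unfolding V'_def by (rule card_sym_diff_subspace_eq_double) (use V S \<open>finite V\<close> in auto)
    have V': "sym_diff_subspace V'" "V' \<subseteq> Pow {0..<n}"
      using V by (auto simp: V'_def intro: sym_diff_subspace_Int sym_diff_subspace_Pow)
    have "card V' \<noteq> 0"
      using V'(1) \<open>finite V\<close> by (auto simp: sym_diff_subspace_def V'_def)
    then have card_less: "card V' < card V"
      using card_V by simp
    define B where "B = replace_col A (vec n (\<lambda>i. (\<Sum>j\<in>S. A $$ (i, j)) div 2)) k"
    have "det A = 2 * det B"
      unfolding B_def using A S_sub S(2) even_sums S(1)
      by (intro det_eq_double_det_replace_col_half_sum) auto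
    moreover have "int (card V') dvd det B"
    proof (rule less.hyps[OF card_less _ V'])
      show "B \<in> carrier_mat n n"
        using A by (simp add: B_def replace_col_def)
      show "\<forall>T\<in>V'. \<forall>i<n. even (\<Sum>j\<in>T. B $$ (i, j))"
      proof (intro ballI allI impI)
        fix T i assume T: "T \<in> V'" and i: "i < n"
        then have "T \<subseteq> {0..<n}" "k \<notin> T" "T \<in> V"
          using V'(2) unfolding V'_def by blast+
        then show "even (\<Sum>j\<in>T. B $$ (i, j))"
          using even_sums i by (simp add: B_def sum_row_replace_col_eq[OF A i])
      qed
    qed
    ultimately show ?thesis
      using card_V by simp
  qed
qed

lemma even_sum_sign_cong:
  fixes f g :: "'a \<Rightarrow> int"
  assumes "\<forall>x\<in>S. f x = g x \<or> f x = - g x"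
  shows "even (sum f S) \<longleftrightarrow> even (sum g S)"
proof -
  have "even (f x - g x)" if "x \<in> S" for x
    using assms that by auto
  then have "even (sum f S - sum g S)"
    by (simp add: sum_subtractf[symmetric] dvd_sum)
  then show ?thesis by simp
qed

definition Z2_span :: "nat \<Rightarrow> (nat \<Rightarrow> 'a set) \<Rightarrow> 'a set set" where
  "Z2_span n C = (\<lambda>S. symdiff_sum S C) ` Pow {0..<n}"

lemma symdiff_sum_sym_diff:
  assumes "finite S" "finite T"
  shows "symdiff_sum (sym_diff S T) C = sym_diff (symdiff_sum S C) (symdiff_sum T C)"
proof -
  have "{i \<in> sym_diff S T. v \<in> C i} = sym_diff {i \<in> S. v \<in> C i} {i \<in> T. v \<in> C i}" for v
    by blast
  then show ?thesis
    using even_card_sym_diff[of "{i \<in> S. _ \<in> C i}" "{i \<in> T. _ \<in> C i}"] assms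
    by (auto simp: symdiff_sum_def)
qed

lemma symdiff_sum_insert:
  assumes "finite S" "x \<notin> S"
  shows "symdiff_sum (insert x S) C = sym_diff (C x) (symdiff_sum S C)"
proof -
  have "{i \<in> {x}. v \<in> C i} = (if v \<in> C x then {x} else {})" for v
    by auto
  then have "symdiff_sum {x} C = C x"
    by (auto simp: symdiff_sum_def)
  moreover have "insert x S = sym_diff {x} S"
    using assms(2) by blast
  ultimately show ?thesis
    using symdiff_sum_sym_diff[of "{x}" S C] assms(1) by simp
qed

lemma sym_diff_subspace_Z2_span: "sym_diff_subspace (Z2_span n C)"
proof -
  have "symdiff_sum {} C = {}"
    by (simp add: symdiff_sum_def)
  moreover have "sym_diff S T \<in> Pow {0..<n}" if "S \<in> Pow {0..<n}" "T \<in> Pow {0..<n}" for S T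
    using that by blast
  ultimately show ?thesis
    unfolding sym_diff_subspace_def Z2_span_def
    by (auto simp: symdiff_sum_sym_diff[symmetric] finite_subset image_iff)
qed

lemma card_Z2_span:
  assumes "lin_indep_Z2 n C"
  shows "card (Z2_span n C) = 2 ^ n"
proof -
  have "inj_on (\<lambda>S. symdiff_sum S C) (Pow {0..<n})"
  proof (rule inj_onI)
    fix S T assume S: "S \<in> Pow {0..<n}" and T: "T \<in> Pow {0..<n}"
      and eq: "symdiff_sum S C = symdiff_sum T C"
    have "finite S" "finite T"
      using S T finite_subset by auto
    then have "symdiff_sum (sym_diff S T) C = {}"
      using eq by (simp add: symdiff_sum_sym_diff)
    moreover have "sym_diff S T \<subseteq> {0..<n}"
      using S T by blast
    ultimately have "sym_diff S T = {}"
      using assms unfolding lin_indep_Z2_def by blast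
    then show "S = T" by blast
  qed
  then show ?thesis
    by (simp add: Z2_span_def card_image card_Pow)
qed

lemma Z2_span_subset:
  assumes V: "sym_diff_subspace V" and C: "\<forall>i<n. C i \<in> V"
  shows "Z2_span n C \<subseteq> V"
proof -
  have "symdiff_sum S C \<in> V" if "finite S" "S \<subseteq> {0..<n}" for S
    using that
  proof (induction S rule: finite_induct)
    case empty
    then show ?case
      using V by (simp add: symdiff_sum_def sym_diff_subspace_def)
  next
    case (insert x S)
    then show ?case
      using V C by (simp add: symdiff_sum_insert sym_diff_subspace_def)
  qed
  then show ?thesis
    unfolding Z2_span_def using finite_subset by blast
qed

definition positions :: "'a list \<Rightarrow> 'a set \<Rightarrow> nat set" where
  "positions xs T = {j. j < length xs \<and> xs ! j \<in> T}"

lemma positions_sym_diff: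
  "positions xs (sym_diff S T) = sym_diff (positions xs S) (positions xs T)"
  by (auto simp: positions_def)

lemma nth_image_positions: "(!) xs ` positions xs T = T \<inter> set xs"
  by (auto simp: positions_def in_set_conv_nth)

lemma inj_on_positions: "inj_on (positions xs) (Pow (set xs))"
  by (rule inj_onI) (metis nth_image_positions Int_absorb2 PowD)

lemma card_positions:
  assumes "distinct xs"
  shows "card (positions xs T) = card (T \<inter> set xs)"
proof -
  have "inj_on ((!) xs) (positions xs T)"
    using assms by (auto simp: positions_def inj_on_def nth_eq_iff_index_eq)
  then show ?thesis
    by (metis card_image nth_image_positions)
qed

lemma adj_mat_eq_bip_adj_mat: "adj_mat N E = bip_adj_mat E [0..<N] [0..<N]"
  by (rule eq_matI) (auto simp: adj_mat_def bip_adj_mat_def)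

lemma bip_adj_mat_row_sum_positions:
  assumes "distinct bs" "i < length ws"
  shows "(\<Sum>j\<in>positions bs T. bip_adj_mat E ws bs $$ (i, j)) = int (card {u \<in> T \<inter> set bs. E (ws ! i) u})"
proof -
  have "(\<Sum>j\<in>positions bs T. bip_adj_mat E ws bs $$ (i, j))
      = (\<Sum>j\<in>positions bs T. if E (ws ! i) (bs ! j) then 1 else 0)"
    using assms(2) by (intro sum.cong) (auto simp: bip_adj_mat_def positions_def)
  also have "\<dots> = int (card (positions bs {u \<in> T. E (ws ! i) u}))"
    by (simp add: sum.If_cases positions_def Int_def conj_ac)
  also have "\<dots> = int (card {u \<in> T \<inter> set bs. E (ws ! i) u})"
    using assms(1) by (simp add: card_positions Int_def conj_ac)
  finally show ?thesis .
qed

lemma card_dvd_det_bip_signing: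
  assumes H: "sign_change_of H (bip_adj_mat E ws bs)" and len: "length ws = length bs"
    and bs: "distinct bs"
    and V: "sym_diff_subspace V" "V \<subseteq> Pow (set bs)"
    and even_deg: "\<forall>T\<in>V. \<forall>w\<in>set ws. even (card {u \<in> T. E w u})"
  shows "int (card V) dvd det H"
proof -
  let ?n = "length bs"
  have H_carrier: "H \<in> carrier_mat ?n ?n"
    using H len by (auto simp: sign_change_of_def bip_adj_mat_def)
  have "int (card (positions bs ` V)) dvd det H"
  proof (rule card_dvd_det_if_even_col_sums[OF H_carrier])
    show "sym_diff_subspace (positions bs ` V)"
      using V(1) by (rule sym_diff_subspace_image) (simp add: positions_def, rule positions_sym_diff)
    show "positions bs ` V \<subseteq> Pow {0..<?n}"
      by (auto simp: positions_def)
    show "\<forall>J\<in>positions bs ` V. \<forall>i<?n. even (\<Sum>j\<in>J. H $$ (i, j))"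
    proof (intro ballI allI impI)
      fix J i assume J: "J \<in> positions bs ` V" and i: "i < ?n"
      then obtain T where T: "T \<in> V" "J = positions bs T" by blast
      have "even (\<Sum>j\<in>J. H $$ (i, j)) \<longleftrightarrow> even (\<Sum>j\<in>J. bip_adj_mat E ws bs $$ (i, j))"
        using H i len T(2) by (intro even_sum_sign_cong) (auto simp: sign_change_of_def positions_def bip_adj_mat_def)
      moreover have "T \<inter> set bs = T"
        using T(1) V(2) by blast
      moreover have "ws ! i \<in> set ws"
        using i len by simp
      ultimately show "even (\<Sum>j\<in>J. H $$ (i, j))"
        using bip_adj_mat_row_sum_positions[OF bs, of i ws E T] even_deg T i len by simp
    qed
  qed
  moreover have "card (positions bs ` V) = card V"
    using V(2) inj_on_positions by (metis card_image inj_on_subset)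
  ultimately show ?thesis by simp
qed

lemma sym_diff_subspace_channels: "sym_diff_subspace {C. channel N E C}"
  unfolding sym_diff_subspace_def
proof (intro conjI ballI)
  show "{} \<in> {C. channel N E C}"
    by (simp add: channel_def)
  fix A B assume "A \<in> {C. channel N E C}" "B \<in> {C. channel N E C}"
  then have A: "channel N E A" and B: "channel N E B" by simp_all
  have "even (card {u \<in> sym_diff A B. E v u})" if v: "v < N" for v
  proof -
    have "finite {u \<in> A. E v u}" "finite {u \<in> B. E v u}"
      using A B by (auto simp: channel_def intro: finite_subset)
    then have "even (card (sym_diff {u \<in> A. E v u} {u \<in> B. E v u}))
        \<longleftrightarrow> even (card {u \<in> A. E v u} + card {u \<in> B. E v u})"
      by (rule even_card_sym_diff)
    moreover have "even (card {u \<in> A. E v u})" "even (card {u \<in> B. E v u})"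
      using A B v unfolding channel_def by blast+
    ultimately have "even (card (sym_diff {u \<in> A. E v u} {u \<in> B. E v u}))"
      by simp
    moreover have "{u \<in> sym_diff A B. E v u} = sym_diff {u \<in> A. E v u} {u \<in> B. E v u}"
      by blast
    ultimately show ?thesis
      by simp
  qed
  then show "sym_diff A B \<in> {C. channel N E C}"
    using A B by (auto simp: channel_def)
qed

lemma kasteleyn_card_dvd:
  assumes K: "kasteleyn_signing N E K"
    and V: "sym_diff_subspace V" "V \<subseteq> {C. channel N E C}"
  shows "card V dvd num_pm N E ^ 2"
proof -
  have "int (card V) dvd det K"
  proof (rule card_dvd_det_bip_signing)
    show "sign_change_of K (bip_adj_mat E [0..<N] [0..<N])"
      using K by (simp add: kasteleyn_signing_def adj_mat_eq_bip_adj_mat)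
    show "V \<subseteq> Pow (set [0..<N])" "\<forall>T\<in>V. \<forall>w\<in>set [0..<N]. even (card {u \<in> T. E w u})"
      using V(2) by (auto simp: channel_def)
  qed (use V(1) in simp_all)
  then show ?thesis
    using K by (simp add: kasteleyn_signing_def flip: of_nat_power)
qed

lemma card_colour_class_eq_card_perfect_matching:
  assumes sg: "simple_graph N E" and bc: "bipartite_col N E black"
    and pm: "perfect_matching N E M"
  shows "card {v. v < N \<and> black v = c} = card M"
proof -
  let ?X = "{v. v < N \<and> black v = c}"
  define e where "e v = (THE e. e \<in> M \<and> v \<in> e)" for v
  have e: "e v \<in> M" "v \<in> e v" if "v < N" for v
    using pm that theI'[of "\<lambda>e. e \<in> M \<and> v \<in> e"] unfolding perfect_matching_def e_def by blast+
  have e_unique: "e v = f" if "v < N" "f \<in> M" "v \<in> f" for v f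
    using pm that e[OF that(1)] unfolding perfect_matching_def by blast
  have edge: "\<exists>u w. f = {u, w} \<and> E u w" if "f \<in> M" for f
    using pm that unfolding perfect_matching_def edges_def by blast
  have "bij_betw e ?X M"
  proof (rule bij_betwI')
    fix x y assume x: "x \<in> ?X" and y: "y \<in> ?X"
    show "e x = e y \<longleftrightarrow> x = y"
    proof
      assume eq: "e x = e y"
      obtain u w where uw: "e x = {u, w}" "E u w"
        using edge e x by force
      have "black u \<noteq> black w"
        using bc uw by (auto simp: bipartite_col_def)
      moreover have "x \<in> {u, w}" "y \<in> {u, w}"
        using e x y eq uw by (metis mem_Collect_eq)+
      ultimately show "x = y"
        using x y by auto
    qed simp
  next
    fix x assume "x \<in> ?X"
    then show "e x \<in> M" using e by auto
  next
    fix f assume f: "f \<in> M"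
    obtain u w where uw: "f = {u, w}" "E u w"
      using edge f by blast
    have "black u \<noteq> black w" "u < N" "w < N"
      using bc sg uw by (auto simp: bipartite_col_def simple_graph_def)
    then obtain v where "v \<in> {u, w}" "black v = c" "v < N" by auto
    then show "\<exists>x\<in>?X. f = e x"
      using e_unique[of v f] f uw by auto
  qed
  then show ?thesis by (rule bij_betw_same_card)
qed

lemma num_pm_eq_0_if_unbalanced:
  assumes "simple_graph N E" "bipartite_col N E black"
    and "card {v. v < N \<and> \<not> black v} \<noteq> card {v. v < N \<and> black v}"
  shows "num_pm N E = 0"
proof -
  have "\<not> perfect_matching N E M" for M
    using card_colour_class_eq_card_perfect_matching[OF assms(1,2), of M False]
      card_colour_class_eq_card_perfect_matching[OF assms(1,2), of M True] assms(3)
    by auto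
  then show ?thesis by (simp add: num_pm_def)
qed

lemma bipartite_kasteleyn_card_dvd:
  assumes sg: "simple_graph N E" and bc: "bipartite_col N E black"
    and ad: "admits_bip_kasteleyn N E black"
    and V: "sym_diff_subspace V" "V \<subseteq> {C. channel N E C} \<inter> Pow {v. black v}"
  shows "card V dvd num_pm N E"
proof -
  obtain ws bs where ws: "distinct ws" "set ws = {v. v < N \<and> \<not> black v}"
    and bs: "distinct bs" "set bs = {v. v < N \<and> black v}"
    and signing: "length ws = length bs \<Longrightarrow>
      \<exists>H. sign_change_of H (bip_adj_mat E ws bs) \<and> det H = int (num_pm N E)"
    using ad unfolding admits_bip_kasteleyn_def by blast
  show ?thesis
  proof (cases "length ws = length bs")
    case False
    then have "num_pm N E = 0"
      using num_pm_eq_0_if_unbalanced[OF sg bc] ws bs by (metis distinct_card)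
    then show ?thesis by simp
  next
    case True
    then obtain H where H: "sign_change_of H (bip_adj_mat E ws bs)" "det H = int (num_pm N E)"
      using signing by blast
    have "int (card V) dvd det H"
    proof (rule card_dvd_det_bip_signing[OF H(1) True bs(1) V(1)])
      have "T \<subseteq> set bs \<and> (\<forall>w\<in>set ws. even (card {u \<in> T. E w u}))" if "T \<in> V" for T
      proof -
        have "channel N E T" "T \<subseteq> {v. black v}"
          using V(2) that by auto
        then show ?thesis
          using ws(2) bs(2) unfolding channel_def by auto
      qed
      then show "V \<subseteq> Pow (set bs)" "\<forall>T\<in>V. \<forall>w\<in>set ws. even (card {u \<in> T. E w u})"
        by auto
    qed
    then show ?thesis
      using H(2) by simp
  qed
qed

theorem theorem3p5:
  fixes N :: nat and E :: "nat \<Rightarrow> nat \<Rightarrow> bool"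
  assumes "simple_graph N E"
    and "\<exists>K. kasteleyn_signing N E K"
  shows "(\<forall>n C. (\<forall>i<n. channel N E (C i)) \<and> lin_indep_Z2 n C \<longrightarrow> 2 ^ n dvd (num_pm N E) ^ 2)
       \<and> card {C. channel N E C} dvd (num_pm N E) ^ 2
       \<and> (\<forall>black. bipartite_col N E black \<and> admits_bip_kasteleyn N E black \<longrightarrow>
            (\<forall>n C. (\<forall>i<n. channel N E (C i) \<and> C i \<subseteq> {v. black v}) \<and> lin_indep_Z2 n C
                \<longrightarrow> 2 ^ n dvd num_pm N E))"
proof (intro conjI allI impI)
  obtain K where K: "kasteleyn_signing N E K"
    using assms(2) by blast
  show "card {C. channel N E C} dvd num_pm N E ^ 2"
    using kasteleyn_card_dvd[OF K sym_diff_subspace_channels] by simp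
  fix n C
  {
    assume C: "(\<forall>i<n. channel N E (C i)) \<and> lin_indep_Z2 n C"
    have "Z2_span n C \<subseteq> {C. channel N E C}"
      by (rule Z2_span_subset[OF sym_diff_subspace_channels]) (use C in simp)
    then have "card (Z2_span n C) dvd num_pm N E ^ 2"
      by (rule kasteleyn_card_dvd[OF K sym_diff_subspace_Z2_span])
    then show "2 ^ n dvd num_pm N E ^ 2"
      unfolding card_Z2_span[OF conjunct2[OF C]] .
  }
  fix black
  let ?V = "{C. channel N E C} \<inter> Pow {v. black v}"
  assume G: "bipartite_col N E black \<and> admits_bip_kasteleyn N E black"
    and C: "(\<forall>i<n. channel N E (C i) \<and> C i \<subseteq> {v. black v}) \<and> lin_indep_Z2 n C"
  have "Z2_span n C \<subseteq> ?V"
    by (rule Z2_span_subset)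
      (use C in \<open>auto intro: sym_diff_subspace_Int sym_diff_subspace_channels sym_diff_subspace_Pow\<close>)
  then have "card (Z2_span n C) dvd num_pm N E"
    using G bipartite_kasteleyn_card_dvd[OF assms(1) _ _ sym_diff_subspace_Z2_span] by blast
  then show "2 ^ n dvd num_pm N E"
    unfolding card_Z2_span[OF conjunct2[OF C]] .
qed

end
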